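(* Let $a\geq b\geq 1$ be integers with $a+b=n$, let $2\le k\le n$, and let $Q$ be the probability distribution on $S_n$ which is uniform on the set of $k$-cycles. Let $X$ be the set of tabloids of shape $\lambda=(a,b)$, i.e. ordered pairs $(A,B)$ of disjoint subsets of $\{1,\dots,n\}$ with $|A|=a$, $|B|=b$, $A\cup B=\{1,\dots,n\}$, with the natural action of $S_n$. For a positive integer $N$ let $q^{(N)}:=\sum_{g\in S_n}Q^N(g)e_g$, where $Q^N$ is the $N$-fold convolution of $Q$. Then for every $x_0\in X$, \[\|q^{(N)}\cdot e_{x_0}-\overline{u}_X\|^2_{\rm TV}\le\frac{1}{4}\sum_{t=1}^b \frac{\left(\left[\binom{n-k}{n-t}-\binom{n-k}{n+1-t}\right] + \left[\binom{n-k}{t}-\binom{n-k}{t-1}\right]\right)^{2N}}{\left(\binom{n}{t}-\binom{n}{t-1}\right)^{2N-1}}.\]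
   Context: Convolution: $(P\ast R)(h)=\sum_gP(hg^{-1})R(g)$. $\mathbb{C}X$ has basis $\{e_x:x\in X\}$ and is a module over the group algebra $\mathbb{C}S_n$ via $e_g\cdot e_x:=e_{g(x)}$. $\|h\|_{\rm TV}:=\frac12\sum_x|h(x)|$ for $h=\sum_xh(x)e_x$, and $\overline{u}_X:=\frac1{|X|}\sum_xe_x$. Binomial coefficients $\binom{m}{j}$ are $0$ if $j<0$ or $j>m$. *)

theory Defs
  imports "HOL-Analysis.Analysis" "HOL-Combinatorics.Combinatorics"
begin

definition Sym :: "nat \<Rightarrow> (nat \<Rightarrow> nat) set" where
  "Sym n = {p. p permutes {1..n}}"

definition kcycles :: "nat \<Rightarrow> nat \<Rightarrow> (nat \<Rightarrow> nat) set" where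
  "kcycles n k = {p. \<exists>cs. distinct cs \<and> length cs = k \<and> set cs \<subseteq> {1..n} \<and> p = cycle_of_list cs}"

definition Qcyc :: "nat \<Rightarrow> nat \<Rightarrow> (nat \<Rightarrow> nat) \<Rightarrow> real" where
  "Qcyc n k g = (if g \<in> kcycles n k then 1 / real (card (kcycles n k)) else 0)"

definition conv :: "nat \<Rightarrow> ((nat \<Rightarrow> nat) \<Rightarrow> real) \<Rightarrow> ((nat \<Rightarrow> nat) \<Rightarrow> real) \<Rightarrow> (nat \<Rightarrow> nat) \<Rightarrow> real" where
  "conv n P R h = (\<Sum>g\<in>Sym n. P (h \<circ> inv g) * R g)"

fun conv_pow :: "nat \<Rightarrow> ((nat \<Rightarrow> nat) \<Rightarrow> real) \<Rightarrow> nat \<Rightarrow> (nat \<Rightarrow> nat) \<Rightarrow> real" where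
  "conv_pow n P 0 = (\<lambda>g. if g = id then 1 else 0)"
| "conv_pow n P (Suc N) = conv n P (conv_pow n P N)"

definition tabloids :: "nat \<Rightarrow> nat \<Rightarrow> nat \<Rightarrow> (nat set \<times> nat set) set" where
  "tabloids n a b = {(A, B). A \<inter> B = {} \<and> card A = a \<and> card B = b \<and> A \<union> B = {1..n}}"

definition act :: "(nat \<Rightarrow> nat) \<Rightarrow> nat set \<times> nat set \<Rightarrow> nat set \<times> nat set" where
  "act g x = (g ` fst x, g ` snd x)"

text \<open>Coefficients of q \<cdot> e_{x0} in the basis e_x of CX, where q = \<Sum>_g P(g) e_g.\<close>
definition act_vec :: "nat \<Rightarrow> ((nat \<Rightarrow> nat) \<Rightarrow> real) \<Rightarrow> nat set \<times> nat set \<Rightarrow> nat set \<times> nat set \<Rightarrow> real" where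
  "act_vec n P x0 x = (\<Sum>g\<in>{g\<in>Sym n. act g x0 = x}. P g)"

definition tv_unif :: "'x set \<Rightarrow> ('x \<Rightarrow> real) \<Rightarrow> real" where
  "tv_unif X h = (1/2) * (\<Sum>x\<in>X. \<bar>h x - 1 / real (card X)\<bar>)"

end

(*
  The action of S_n on tabloids of shape (a,b) is its action on b-subsets of {1..n}, so the
  coefficients of q^(N) e_x0 form a row of K^N, where K x y is the Q-probability that g x = y.
  As Q is a class function, K x y depends only on |x Int y|; hence K^N is symmetric with constant
  diagonal, and Cauchy-Schwarz gives 4 TV^2 <= tr K^(2N) - 1, the trace taken over b-subsets.

  For 2s < n the inclusion matrix from s-subsets to (s+1)-subsets is injective and intertwines
  the two kernels, while K acts as a scalar mu on the annihilator of its transpose, a space of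
  dimension C(n,s+1) - C(n,s). So each level adds mu^m (C(n,s+1) - C(n,s)) to tr K^m, and the
  case m = 1 identifies mu times that dimension as a difference of traces of K. For a k-cycle,
  the trace of K on t-subsets counts its fixed t-subsets, C(n-k,t) + C(n-k,n-t).
*)
theory Submission
  imports Defs "Jordan_Normal_Form.Determinant"
begin

no_notation m_inv (\<open>(\<open>open_block notation=\<open>prefix inv\<close>\<close>inv\<index> _)\<close> [81] 80)

section \<open>Kernels on finite index sets\<close>

text \<open>Matrices indexed by finite sets are represented as functions; \<open>kmult L\<close> sums the middle index
  over \<open>L\<close>, so only the values on the relevant index sets matter.\<close>

definition kmult :: "'b set \<Rightarrow> ('a \<Rightarrow> 'b \<Rightarrow> real) \<Rightarrow> ('b \<Rightarrow> 'c \<Rightarrow> real) \<Rightarrow> 'a \<Rightarrow> 'c \<Rightarrow> real" where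
  "kmult L A B = (\<lambda>x z. \<Sum>y\<in>L. A x y * B y z)"

definition ktrace :: "'a set \<Rightarrow> ('a \<Rightarrow> 'a \<Rightarrow> real) \<Rightarrow> real" where
  "ktrace L A = (\<Sum>x\<in>L. A x x)"

definition kdelta :: "'a \<Rightarrow> 'a \<Rightarrow> real" where
  "kdelta x y = (if x = y then 1 else 0)"

definition ktrans :: "('a \<Rightarrow> 'b \<Rightarrow> real) \<Rightarrow> 'b \<Rightarrow> 'a \<Rightarrow> real" where
  "ktrans A = (\<lambda>y x. A x y)"

fun kpow :: "'a set \<Rightarrow> ('a \<Rightarrow> 'a \<Rightarrow> real) \<Rightarrow> nat \<Rightarrow> 'a \<Rightarrow> 'a \<Rightarrow> real" where
  "kpow L A 0 = kdelta"
| "kpow L A (Suc m) = kmult L (kpow L A m) A"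

lemma kmult_assoc: "kmult L2 (kmult L1 A B) C = kmult L1 A (kmult L2 B C)"
  unfolding kmult_def
  by (auto simp: fun_eq_iff sum_distrib_left sum_distrib_right mult.assoc intro: sum.swap)

lemma ktrace_kmult_commute: "ktrace L1 (kmult L2 A B) = ktrace L2 (kmult L1 B A)"
  unfolding kmult_def ktrace_def by (subst sum.swap) (simp add: mult.commute)

lemma ktrace_cong: "(\<And>x. x \<in> L \<Longrightarrow> A x x = B x x) \<Longrightarrow> ktrace L A = ktrace L B"
  unfolding ktrace_def by (rule sum.cong) auto

lemma ktrace_kdelta: "ktrace L kdelta = real (card L)"
  by (simp add: ktrace_def kdelta_def)

lemma sum_kdelta_left: "finite L \<Longrightarrow> x \<in> L \<Longrightarrow> (\<Sum>y\<in>L. kdelta x y * g y) = g x"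
  by (simp add: kdelta_def if_distrib[of "\<lambda>c. c * _"] cong: if_cong)

lemma sum_kdelta_right: "finite L \<Longrightarrow> z \<in> L \<Longrightarrow> (\<Sum>y\<in>L. g y * kdelta y z) = g z"
  by (simp add: kdelta_def if_distrib[of "\<lambda>c. _ * c"] eq_commute[of _ z] cong: if_cong)

lemma sum_kdelta: "finite L \<Longrightarrow> x \<in> L \<Longrightarrow> (\<Sum>y\<in>L. kdelta x y) = 1"
  using sum_kdelta_left[of L x "\<lambda>_. 1"] by simp

lemma kmult_kdelta_left: "finite L \<Longrightarrow> x \<in> L \<Longrightarrow> kmult L kdelta A x z = A x z"
  unfolding kmult_def by (rule sum_kdelta_left)

lemma kmult_kdelta_right: "finite L \<Longrightarrow> z \<in> L \<Longrightarrow> kmult L A kdelta x z = A x z"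
  unfolding kmult_def by (rule sum_kdelta_right)

lemma kmult_cong:
  assumes "\<And>y. y \<in> L \<Longrightarrow> A x y = A' x y" "\<And>y. y \<in> L \<Longrightarrow> B y z = B' y z"
  shows "kmult L A B x z = kmult L A' B' x z"
  unfolding kmult_def using assms by (auto intro: sum.cong)

lemma ktrace_kpow_1: "finite L \<Longrightarrow> ktrace L (kpow L A 1) = ktrace L A"
  by (intro ktrace_cong) (simp add: kmult_kdelta_left)

lemma kpow_add:
  assumes "finite L" "z \<in> L"
  shows "kpow L A (a + b) x z = kmult L (kpow L A a) (kpow L A b) x z"
  using assms(2)
proof (induction b arbitrary: z)
  case 0
  then show ?case using assms by (simp add: kmult_kdelta_right)
next
  case (Suc b)
  have "kpow L A (a + Suc b) x z = kmult L (kmult L (kpow L A a) (kpow L A b)) A x z"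
    by simp (rule kmult_cong, use Suc in auto)
  also have "\<dots> = kmult L (kpow L A a) (kpow L A (Suc b)) x z"
    by (simp add: kmult_assoc)
  finally show ?case .
qed

lemma kpow_intertwine:
  assumes "finite L1" "finite L2"
    and "\<And>x y. x \<in> L2 \<Longrightarrow> y \<in> L1 \<Longrightarrow> kmult L2 A U x y = kmult L1 U B x y"
  shows "x \<in> L2 \<Longrightarrow> y \<in> L1 \<Longrightarrow> kmult L2 (kpow L2 A m) U x y = kmult L1 U (kpow L1 B m) x y"
proof (induction m arbitrary: x y)
  case 0
  then show ?case using assms by (simp add: kmult_kdelta_left kmult_kdelta_right)
next
  case (Suc m)
  have "kmult L2 (kpow L2 A (Suc m)) U x y = kmult L2 (kpow L2 A m) (kmult L2 A U) x y"
    by (simp add: kmult_assoc)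
  also have "\<dots> = kmult L2 (kpow L2 A m) (kmult L1 U B) x y"
    by (rule kmult_cong) (use Suc assms(3) in auto)
  also have "\<dots> = kmult L1 (kmult L2 (kpow L2 A m) U) B x y"
    by (simp add: kmult_assoc)
  also have "\<dots> = kmult L1 (kmult L1 U (kpow L1 B m)) B x y"
    by (rule kmult_cong) (use Suc in auto)
  also have "\<dots> = kmult L1 U (kpow L1 B (Suc m)) x y"
    by (simp add: kmult_assoc)
  finally show ?case .
qed

lemma kpow_eigenvector:
  assumes "finite L" and eigen: "\<And>x. x \<in> L \<Longrightarrow> (\<Sum>y\<in>L. A x y * f y) = \<mu> * f x"
  shows "x \<in> L \<Longrightarrow> (\<Sum>y\<in>L. kpow L A m x y * f y) = \<mu> ^ m * f x"
proof (induction m arbitrary: x)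
  case 0
  then show ?case using assms by (simp add: sum_kdelta_left)
next
  case (Suc m)
  have "(\<Sum>y\<in>L. kpow L A (Suc m) x y * f y) = (\<Sum>w\<in>L. kpow L A m x w * (\<Sum>y\<in>L. A w y * f y))"
    by (simp add: kmult_def sum_distrib_left sum_distrib_right mult.assoc) (rule sum.swap)
  also have "\<dots> = \<mu> * (\<Sum>w\<in>L. kpow L A m x w * f w)"
    by (simp add: eigen sum_distrib_left mult.left_commute)
  finally show ?case using Suc by simp
qed

lemma kpow_row_sum:
  assumes "finite L" "\<And>x. x \<in> L \<Longrightarrow> (\<Sum>y\<in>L. A x y) = 1"
  shows "x \<in> L \<Longrightarrow> (\<Sum>y\<in>L. kpow L A m x y) = 1"
  using kpow_eigenvector[of L A "\<lambda>_. 1" 1] assms by simp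

lemma kpow_bij_invariant:
  assumes bij: "bij_betw \<phi> L L" and inv: "\<And>x y. x \<in> L \<Longrightarrow> y \<in> L \<Longrightarrow> A (\<phi> x) (\<phi> y) = A x y"
    and "x \<in> L" "y \<in> L"
  shows "kpow L A m (\<phi> x) (\<phi> y) = kpow L A m x y"
  using assms(4)
proof (induction m arbitrary: y)
  case 0
  then show ?case using bij assms(3) by (auto simp: kdelta_def bij_betw_def dest: inj_onD)
next
  case (Suc m)
  have "kpow L A (Suc m) (\<phi> x) (\<phi> y) = (\<Sum>z\<in>L. kpow L A m (\<phi> x) (\<phi> z) * A (\<phi> z) (\<phi> y))"
    by (simp add: kmult_def) (rule sum.reindex_bij_betw[OF bij, symmetric])
  also have "\<dots> = kpow L A (Suc m) x y"
    using Suc inv by (simp add: kmult_def)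
  finally show ?case .
qed

section \<open>Trace of a kernel intertwined with an injective one\<close>

definition kernel_injective :: "'a set \<Rightarrow> 'b set \<Rightarrow> ('a \<Rightarrow> 'b \<Rightarrow> real) \<Rightarrow> bool" where
  "kernel_injective X Y U \<longleftrightarrow>
    (\<forall>f. (\<forall>x\<in>X. (\<Sum>y\<in>Y. U x y * f y) = 0) \<longrightarrow> (\<forall>y\<in>Y. f y = 0))"

lemma kernel_injectiveD:
  "kernel_injective X Y U \<Longrightarrow> (\<And>x. x \<in> X \<Longrightarrow> (\<Sum>y\<in>Y. U x y * f y) = 0) \<Longrightarrow> y \<in> Y \<Longrightarrow> f y = 0"
  unfolding kernel_injective_def by blast

definition kernel_mat :: "(nat \<Rightarrow> 'a) \<Rightarrow> nat \<Rightarrow> ('a \<Rightarrow> 'a \<Rightarrow> real) \<Rightarrow> real mat" where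
  "kernel_mat e d C = mat d d (\<lambda>(i, j). C (e i) (e j))"

lemma kernel_mat_mult:
  assumes e: "bij_betw e {..<d} L" and "i < d" "j < d"
  shows "(kernel_mat e d C * kernel_mat e d D) $$ (i, j) = kmult L C D (e i) (e j)"
  using assms by (simp add: kernel_mat_def kmult_def times_mat_def scalar_prod_def atLeast0LessThan)
    (rule sum.reindex_bij_betw[OF e])

lemma kernel_mat_det_nonzero:
  assumes e: "bij_betw e {..<d} L" and inj: "kernel_injective L L A"
  shows "det (kernel_mat e d A) \<noteq> 0"
proof
  have M: "kernel_mat e d A \<in> carrier_mat d d" by (simp add: kernel_mat_def)
  assume "det (kernel_mat e d A) = 0"
  then obtain v where v: "v \<in> carrier_vec d" "v \<noteq> 0\<^sub>v d" "kernel_mat e d A *\<^sub>v v = 0\<^sub>v d"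
    using det_0_iff_vec_prod_zero_field[OF M] by blast
  define f where "f y = vec_index v (inv_into {..<d} e y)" for y
  have f_e: "f (e j) = vec_index v j" if "j < d" for j
    using e that by (simp add: f_def bij_betw_inv_into_left)
  have "(\<Sum>y\<in>L. A (e i) y * f y) = vec_index (kernel_mat e d A *\<^sub>v v) i" if "i < d" for i
    using that v(1) f_e
    by (simp add: kernel_mat_def mult_mat_vec_def scalar_prod_def atLeast0LessThan
        sum.reindex_bij_betw[OF e, symmetric])
  moreover have "\<exists>i<d. x = e i" if "x \<in> L" for x
    using that bij_betw_imp_surj_on[OF e] by blast
  ultimately have "(\<Sum>y\<in>L. A x y * f y) = 0" if "x \<in> L" for x
    using that v(3) by auto
  then have "f y = 0" if "y \<in> L" for y
    using that by (rule kernel_injectiveD[OF inj])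
  then have "vec_index v j = 0" if "j < d" for j
    using f_e[OF that] bij_betwE[OF e] that by auto
  then have "v = 0\<^sub>v d" using v(1) by (intro eq_vecI) auto
  with v(2) show False by simp
qed

lemma injective_kernel_invertible:
  assumes fin: "finite L" and inj: "kernel_injective L L A"
  obtains G where "\<And>x z. x \<in> L \<Longrightarrow> z \<in> L \<Longrightarrow> kmult L A G x z = kdelta x z"
    and "\<And>x z. x \<in> L \<Longrightarrow> z \<in> L \<Longrightarrow> kmult L G A x z = kdelta x z"
proof -
  obtain e where e: "bij_betw e {..<card L} L"
    using ex_bij_betw_nat_finite[OF fin] unfolding atLeast0LessThan by blast
  let ?d = "card L" and ?ie = "inv_into {..<card L} e"
  have M: "kernel_mat e ?d A \<in> carrier_mat ?d ?d" by (simp add: kernel_mat_def)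
  obtain B where B: "B \<in> carrier_mat ?d ?d" "kernel_mat e ?d A * B = 1\<^sub>m ?d" "B * kernel_mat e ?d A = 1\<^sub>m ?d"
    using det_non_zero_imp_unit[OF M kernel_mat_det_nonzero[OF e inj], of "()"]
    unfolding Units_def ring_mat_def by auto
  define G where "G x z = B $$ (?ie x, ?ie z)" for x z
  have G: "kernel_mat e ?d G = B"
    using B(1) e by (auto simp: kernel_mat_def G_def bij_betw_inv_into_left)
  have ie: "?ie x < ?d" "e (?ie x) = x" if "x \<in> L" for x
    using that bij_betwE[OF bij_betw_inv_into[OF e]] bij_betw_inv_into_right[OF e] by auto
  have ie_eq_iff: "?ie x = ?ie z \<longleftrightarrow> x = z" if "x \<in> L" "z \<in> L" for x z
    using that ie(2) by metis
  show thesis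
  proof (rule that[of G])
    show "kmult L A G x z = kdelta x z" "kmult L G A x z = kdelta x z" if "x \<in> L" "z \<in> L" for x z
      using kernel_mat_mult[OF e ie(1)[OF that(1)] ie(1)[OF that(2)], of A G]
        kernel_mat_mult[OF e ie(1)[OF that(1)] ie(1)[OF that(2)], of G A] that
      by (simp_all add: G B ie ie_eq_iff kdelta_def)
  qed
qed

lemma sum_sq_kernel_apply:
  fixes U :: "'a \<Rightarrow> 'b \<Rightarrow> real"
  shows "(\<Sum>x\<in>X. (\<Sum>y\<in>Y. U x y * f y)^2) = (\<Sum>y\<in>Y. \<Sum>y'\<in>Y. f y * f y' * (\<Sum>x\<in>X. U x y * U x y'))"
proof -
  have "(\<Sum>x\<in>X. (\<Sum>y\<in>Y. U x y * f y)^2) = (\<Sum>x\<in>X. \<Sum>y\<in>Y. \<Sum>y'\<in>Y. f y * f y' * (U x y * U x y'))"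
    by (simp add: power2_eq_square sum_product mult_ac)
  also have "\<dots> = (\<Sum>y\<in>Y. \<Sum>y'\<in>Y. \<Sum>x\<in>X. f y * f y' * (U x y * U x y'))"
    by (subst sum.swap) (simp add: sum.swap[of _ X])
  finally show ?thesis by (simp add: sum_distrib_left)
qed

lemma gram_kernel_invertible:
  fixes U :: "'a \<Rightarrow> 'b \<Rightarrow> real"
  assumes fin: "finite X" "finite Y"
    and inj: "kernel_injective X Y U"
  obtains G where "\<And>y z. y \<in> Y \<Longrightarrow> z \<in> Y \<Longrightarrow> kmult Y (kmult X (ktrans U) U) G y z = kdelta y z"
    and "\<And>y z. y \<in> Y \<Longrightarrow> z \<in> Y \<Longrightarrow> kmult Y G (kmult X (ktrans U) U) y z = kdelta y z"
proof -
  have gram_inj: "kernel_injective Y Y (kmult X (ktrans U) U)"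
    unfolding kernel_injective_def
  proof (intro allI impI ballI)
    fix f y
    assume gram_f: "\<forall>y\<in>Y. (\<Sum>y'\<in>Y. kmult X (ktrans U) U y y' * f y') = 0" and "y \<in> Y"
    have "(\<Sum>x\<in>X. (\<Sum>y\<in>Y. U x y * f y)^2) = (\<Sum>y\<in>Y. f y * (\<Sum>y'\<in>Y. kmult X (ktrans U) U y y' * f y'))"
      unfolding sum_sq_kernel_apply
      by (simp add: kmult_def ktrans_def sum_distrib_left mult_ac)
    also have "\<dots> = 0" using gram_f by simp
    finally have "(\<Sum>x\<in>X. (\<Sum>y\<in>Y. U x y * f y)^2) = 0" .
    then have "(\<Sum>y\<in>Y. U x y * f y)^2 = 0" if "x \<in> X" for x
      using fin(1) that by (subst (asm) sum_nonneg_eq_0_iff) auto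
    then show "f y = 0"
      using kernel_injectiveD[OF inj] \<open>y \<in> Y\<close> by simp
  qed
  show thesis
    by (rule injective_kernel_invertible[OF fin(2) gram_inj]) (rule that)
qed

text \<open>In the application \<open>P = U (W U)\<^sup>-\<^sup>1 W\<close> with \<open>W\<close> the transpose of \<open>U\<close>: the projection onto
  the range of \<open>U\<close>, whose complement \<open>1 - P\<close> maps into the kernel of \<open>W\<close>.\<close>

lemma ktrace_kpow_split:
  fixes U :: "'a \<Rightarrow> 'b \<Rightarrow> real"
  assumes fin: "finite X"
    and proj: "\<And>y x. y \<in> Y \<Longrightarrow> x \<in> X \<Longrightarrow> kmult X (ktrans U) P y x = U x y"
    and eigen: "\<And>f. (\<And>y. y \<in> Y \<Longrightarrow> (\<Sum>x\<in>X. U x y * f x) = 0) \<Longrightarrow>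
      (\<And>x. x \<in> X \<Longrightarrow> (\<Sum>x'\<in>X. A x x' * f x') = \<mu> * f x)"
  shows "ktrace X (kpow X A m) = ktrace X (kmult X (kpow X A m) P) + \<mu> ^ m * (real (card X) - ktrace X P)"
proof -
  define E where "E x x' = kdelta x x' - P x x'" for x x'
  have "(\<Sum>x\<in>X. U x y * E x x') = 0" if "y \<in> Y" "x' \<in> X" for y x'
    using proj[OF that] fin that(2)
    by (simp add: E_def kmult_def ktrans_def right_diff_distrib sum_subtractf sum_kdelta_right)
  then have E_eigen: "(\<Sum>x''\<in>X. kpow X A m x x'' * E x'' x') = \<mu> ^ m * E x x'"
    if "x \<in> X" "x' \<in> X" for x x'
    using kpow_eigenvector[OF fin eigen, of "\<lambda>x. E x x'"] that by blast
  have diag: "kpow X A m x x = kmult X (kpow X A m) P x x + \<mu> ^ m * E x x" if "x \<in> X" for x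
  proof -
    have "kpow X A m x x = (\<Sum>x''\<in>X. kpow X A m x x'' * (P x'' x + E x'' x))"
      using fin that by (simp add: E_def sum_kdelta_right)
    also have "\<dots> = kmult X (kpow X A m) P x x + \<mu> ^ m * E x x"
      using E_eigen that by (simp add: kmult_def distrib_left sum.distrib)
    finally show ?thesis .
  qed
  have "(\<Sum>x\<in>X. E x x) = real (card X) - ktrace X P"
    by (simp add: E_def sum_subtractf ktrace_def kdelta_def)
  with diag show ?thesis
    by (simp add: ktrace_def sum.distrib sum_distrib_left[symmetric])
qed

lemma ktrace_kpow_transfer:
  fixes U :: "'a \<Rightarrow> 'b \<Rightarrow> real"
  assumes fin: "finite X" "finite Y"
    and intertwine: "\<And>x y. x \<in> X \<Longrightarrow> y \<in> Y \<Longrightarrow> kmult X A U x y = kmult Y U B x y"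
    and left_inv: "\<And>y z. y \<in> Y \<Longrightarrow> z \<in> Y \<Longrightarrow> kmult Y G (kmult X (ktrans U) U) y z = kdelta y z"
  shows "ktrace X (kmult X (kpow X A m) (kmult Y (kmult Y U G) (ktrans U))) = ktrace Y (kpow Y B m)"
proof -
  let ?W = "ktrans U"
  have "ktrace X (kmult X (kpow X A m) (kmult Y (kmult Y U G) ?W))
      = ktrace X (kmult Y (kmult Y (kmult X (kpow X A m) U) G) ?W)"
    by (simp only: kmult_assoc)
  also have "\<dots> = ktrace Y (kmult X ?W (kmult Y (kmult X (kpow X A m) U) G))"
    by (rule ktrace_kmult_commute)
  also have "\<dots> = ktrace Y (kmult X ?W (kmult Y (kmult Y U (kpow Y B m)) G))"
    by (intro ktrace_cong kmult_cong refl)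
      (use kpow_intertwine[OF fin(2,1) intertwine] in auto)
  also have "\<dots> = ktrace Y (kmult Y (kmult X ?W U) (kmult Y (kpow Y B m) G))"
    by (simp only: kmult_assoc)
  also have "\<dots> = ktrace Y (kmult Y (kmult Y (kpow Y B m) G) (kmult X ?W U))"
    by (rule ktrace_kmult_commute)
  also have "\<dots> = ktrace Y (kmult Y (kpow Y B m) (kmult Y G (kmult X ?W U)))"
    by (simp only: kmult_assoc)
  also have "\<dots> = ktrace Y (kmult Y (kpow Y B m) kdelta)"
    by (intro ktrace_cong kmult_cong refl) (use left_inv in auto)
  also have "\<dots> = ktrace Y (kpow Y B m)"
    by (intro ktrace_cong) (use fin in \<open>simp add: kmult_kdelta_right\<close>)
  finally show ?thesis .
qed

lemma ktrace_kpow_intertwined: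
  fixes U :: "'a \<Rightarrow> 'b \<Rightarrow> real"
  assumes fin: "finite X" "finite Y"
    and inj: "kernel_injective X Y U"
    and intertwine: "\<And>x y. x \<in> X \<Longrightarrow> y \<in> Y \<Longrightarrow> kmult X A U x y = kmult Y U B x y"
    and eigen: "\<And>f. (\<And>y. y \<in> Y \<Longrightarrow> (\<Sum>x\<in>X. U x y * f x) = 0) \<Longrightarrow>
      (\<And>x. x \<in> X \<Longrightarrow> (\<Sum>x'\<in>X. A x x' * f x') = \<mu> * f x)"
  shows "ktrace X (kpow X A m) = ktrace Y (kpow Y B m) + \<mu> ^ m * (real (card X) - real (card Y))"
proof -
  let ?W = "ktrans U"
  obtain G where right_inv: "\<And>y z. y \<in> Y \<Longrightarrow> z \<in> Y \<Longrightarrow> kmult Y (kmult X ?W U) G y z = kdelta y z"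
    and left_inv: "\<And>y z. y \<in> Y \<Longrightarrow> z \<in> Y \<Longrightarrow> kmult Y G (kmult X ?W U) y z = kdelta y z"
    using gram_kernel_invertible[OF fin inj] by blast
  define P where "P = kmult Y (kmult Y U G) ?W"
  have proj: "kmult X ?W P y x = U x y" if "y \<in> Y" for y x
  proof -
    have "kmult X ?W P y x = kmult Y (kmult Y (kmult X ?W U) G) ?W y x"
      by (simp add: P_def kmult_assoc)
    also have "\<dots> = kmult Y kdelta ?W y x"
      by (intro kmult_cong refl) (use that right_inv in auto)
    finally show ?thesis using fin that by (simp add: kmult_kdelta_left ktrans_def)
  qed
  have "ktrace X P = ktrace Y (kmult X ?W (kmult Y U G))"
    unfolding P_def by (rule ktrace_kmult_commute)
  also have "\<dots> = ktrace Y (kmult Y (kmult X ?W U) G)"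
    by (simp only: kmult_assoc)
  also have "\<dots> = real (card Y)"
    by (simp add: ktrace_cong[of Y _ kdelta] right_inv ktrace_kdelta)
  finally show ?thesis
    using ktrace_kpow_split[OF fin(1) proj eigen] ktrace_kpow_transfer[OF fin intertwine left_inv]
    unfolding P_def by simp
qed

section \<open>Subsets of \<open>{1..n}\<close> and the inclusion kernel\<close>

definition tsubsets :: "nat \<Rightarrow> nat \<Rightarrow> nat set set" where
  "tsubsets n t = {x. x \<subseteq> {1..n} \<and> card x = t}"

definition incl :: "'a set \<Rightarrow> 'a set \<Rightarrow> real" where
  "incl x y = of_bool (y \<subseteq> x)"

lemma finite_tsubsets [simp]: "finite (tsubsets n t)"
  by (rule finite_subset[of _ "Pow {1..n}"]) (auto simp: tsubsets_def)

lemma card_tsubsets: "card (tsubsets n t) = n choose t"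
  using n_subsets[of "{1..n}" t] by (simp add: tsubsets_def)

lemma tsubsets_finite_elem: "x \<in> tsubsets n t \<Longrightarrow> finite x"
  by (auto simp: tsubsets_def intro: finite_subset)

lemma tsubsets_0: "tsubsets n 0 = {{}}"
proof -
  have "x = {}" if "x \<subseteq> {1..n}" "card x = 0" for x :: "nat set"
    using that by (metis card_0_eq finite_atLeastAtMost rev_finite_subset)
  then show ?thesis by (auto simp: tsubsets_def)
qed

lemma card_Int_tsubsets_le: "x \<in> tsubsets n t \<Longrightarrow> card (x \<inter> y) \<le> t"
  using card_mono[OF tsubsets_finite_elem, of x n t "x \<inter> y"] by (auto simp: tsubsets_def)

lemma card_Int_tsubsets_eq_iff:
  assumes "x \<in> tsubsets n t" "y \<in> tsubsets n t"
  shows "card (x \<inter> y) = t \<longleftrightarrow> x = y"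
  using assms card_subset_eq[OF tsubsets_finite_elem[OF assms(1)], of "x \<inter> y"]
    card_subset_eq[OF tsubsets_finite_elem[OF assms(2)], of "x \<inter> y"]
  by (auto simp: tsubsets_def)

lemma card_supersets_within:
  assumes "finite A" "w \<subseteq> A" "card w \<le> m"
  shows "card {x. x \<subseteq> A \<and> card x = m \<and> w \<subseteq> x} = (card A - card w) choose (m - card w)"
proof -
  have fin_w: "finite w" using assms(1,2) finite_subset by blast
  have "bij_betw (\<lambda>u. u \<union> w) {u. u \<subseteq> A - w \<and> card u = m - card w} {x. x \<subseteq> A \<and> card x = m \<and> w \<subseteq> x}"
  proof (rule bij_betw_byWitness[where f' = "\<lambda>x. x - w"])
    show "(\<lambda>u. u \<union> w) ` {u. u \<subseteq> A - w \<and> card u = m - card w} \<subseteq> {x. x \<subseteq> A \<and> card x = m \<and> w \<subseteq> x}"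
    proof safe
      fix u assume u: "u \<subseteq> A - w" "card u = m - card w"
      have "finite u" using finite_subset[OF u(1)] assms(1) by simp
      then show "card (u \<union> w) = m" using u fin_w assms(3) by (subst card_Un_disjoint) auto
    qed (use assms(2) in auto)
    show "(\<lambda>x. x - w) ` {x. x \<subseteq> A \<and> card x = m \<and> w \<subseteq> x} \<subseteq> {u. u \<subseteq> A - w \<and> card u = m - card w}"
      using fin_w by (auto simp: card_Diff_subset)
  qed auto
  then have "card {x. x \<subseteq> A \<and> card x = m \<and> w \<subseteq> x} = card {u. u \<subseteq> A - w \<and> card u = m - card w}"
    by (simp add: bij_betw_same_card)
  also have "\<dots> = (card A - card w) choose (m - card w)"
    using assms(1,2) fin_w by (simp add: n_subsets card_Diff_subset)
  finally show ?thesis .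
qed

lemma card_tsubsets_between:
  assumes "z \<in> tsubsets n i" "y \<in> tsubsets n t" "z \<subseteq> y" "i \<le> j"
  shows "card {w \<in> tsubsets n j. z \<subseteq> w \<and> w \<subseteq> y} = (t - i) choose (j - i)"
proof -
  have "{w \<in> tsubsets n j. z \<subseteq> w \<and> w \<subseteq> y} = {w. w \<subseteq> y \<and> card w = j \<and> z \<subseteq> w}"
    using assms(2) by (auto simp: tsubsets_def)
  then show ?thesis
    using card_supersets_within[OF tsubsets_finite_elem[OF assms(2)] assms(3)] assms
    by (simp add: tsubsets_def)
qed

lemma sum_incl_between:
  assumes "z \<in> tsubsets n i" "y \<in> tsubsets n t" "i \<le> j"
  shows "(\<Sum>w\<in>tsubsets n j. incl w z * incl y w) = real ((t - i) choose (j - i)) * incl y z"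
proof -
  have "(\<Sum>w\<in>tsubsets n j. incl w z * incl y w) = card {w \<in> tsubsets n j. z \<subseteq> w \<and> w \<subseteq> y}"
    by (simp add: incl_def of_bool_conj[symmetric] Collect_conj_eq Int_assoc)
  moreover have "card {w \<in> tsubsets n j. z \<subseteq> w \<and> w \<subseteq> y} = (t - i) choose (j - i)" if "z \<subseteq> y"
    using card_tsubsets_between[OF assms(1,2) that assms(3)] .
  ultimately show ?thesis by (cases "z \<subseteq> y") (auto simp: incl_def)
qed

lemma card_Int_choose_eq_sum_incl:
  assumes "x \<in> tsubsets n t"
  shows "real (card (x \<inter> y) choose i) = (\<Sum>z\<in>tsubsets n i. incl x z * incl y z)"
proof -
  have "{z \<in> tsubsets n i. z \<subseteq> x \<inter> y} = {z. z \<subseteq> x \<inter> y \<and> card z = i}"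
    using assms by (auto simp: tsubsets_def)
  then have "card {z \<in> tsubsets n i. z \<subseteq> x \<inter> y} = card (x \<inter> y) choose i"
    using n_subsets[of "x \<inter> y" i] tsubsets_finite_elem[OF assms] by simp
  then show ?thesis
    by (simp add: incl_def of_bool_conj[symmetric] Collect_conj_eq Int_assoc)
qed

lemma card_tsubsets_disjoint:
  assumes "S \<subseteq> {1..n}"
  shows "card {x \<in> tsubsets n t. x \<inter> S = {}} = (n - card S) choose t"
proof -
  have "{x \<in> tsubsets n t. x \<inter> S = {}} = {x. x \<subseteq> {1..n} - S \<and> card x = t}"
    by (auto simp: tsubsets_def)
  then have "card {x \<in> tsubsets n t. x \<inter> S = {}} = card ({1..n} - S) choose t"
    by (simp only: n_subsets finite_Diff finite_atLeastAtMost)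
  then show ?thesis
    using assms finite_subset[OF assms] by (simp add: card_Diff_subset)
qed

lemma card_tsubsets_supersets:
  assumes "S \<subseteq> {1..n}" "t \<le> n"
  shows "card {x \<in> tsubsets n t. S \<subseteq> x} = (n - card S) choose (n - t)"
proof (cases "card S \<le> t")
  case True
  have "{x \<in> tsubsets n t. S \<subseteq> x} = {x. x \<subseteq> {1..n} \<and> card x = t \<and> S \<subseteq> x}"
    by (auto simp: tsubsets_def)
  then have "card {x \<in> tsubsets n t. S \<subseteq> x} = (card {1..n} - card S) choose (t - card S)"
    by (simp only: card_supersets_within[OF finite_atLeastAtMost assms(1) True])
  also have "\<dots> = (n - card S) choose (n - t)"
    using binomial_symmetric[of "t - card S" "n - card S"] True assms(2) by (simp add: diff_diff_eq)
  finally show ?thesis .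
next
  case False
  have "\<not> S \<subseteq> x" if "x \<in> tsubsets n t" for x
  proof
    assume "S \<subseteq> x"
    then have "card S \<le> card x" using tsubsets_finite_elem[OF that] by (rule card_mono[rotated])
    with that False show False by (simp add: tsubsets_def)
  qed
  then have "{x \<in> tsubsets n t. S \<subseteq> x} = {}" by blast
  moreover have "card S \<le> n" using card_mono[OF finite_atLeastAtMost assms(1)] by simp
  then have "(n - card S) choose (n - t) = 0" using False assms(2) by simp
  ultimately show ?thesis by (simp only: card.empty)
qed

lemma card_common_supersets:
  assumes "y \<in> tsubsets n s" "y' \<in> tsubsets n s" "s < n"
  shows "card {x \<in> tsubsets n (Suc s). y \<union> y' \<subseteq> x} =
    (if y = y' then n - s else if card (y \<union> y') = Suc s then 1 else 0)"
proof -
  let ?u = "y \<union> y'"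
  have fin: "finite ?u" using assms tsubsets_finite_elem by blast
  have sub: "?u \<subseteq> {1..n}" using assms by (auto simp: tsubsets_def)
  have card_y: "card y = s" "card y' = s" using assms by (simp_all add: tsubsets_def)
  have ge: "card ?u \<ge> s" using card_mono[OF fin Un_upper1] card_y by simp
  have eq_s: "card ?u = s \<longleftrightarrow> y = y'"
    using card_subset_eq[OF fin Un_upper1] card_subset_eq[OF fin Un_upper2] card_y
    by auto
  have "card {x \<in> tsubsets n (Suc s). ?u \<subseteq> x} = (n - card ?u) choose (n - Suc s)"
    by (rule card_tsubsets_supersets[OF sub]) (use assms(3) in simp)
  moreover have "(n - s) choose (n - Suc s) = n - s"
    using binomial_symmetric[of "n - Suc s" "n - s"] assms(3) by simp
  moreover have "(n - card ?u) choose (n - Suc s) = 0" if "card ?u > Suc s"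
    using that card_mono[OF finite_atLeastAtMost sub] by simp
  ultimately show ?thesis
    using eq_s ge by (cases "card ?u = s \<or> card ?u = Suc s") auto
qed

lemma card_common_subsets:
  assumes "y \<in> tsubsets n s" "y' \<in> tsubsets n s" "s \<ge> 1"
  shows "card {z \<in> tsubsets n (s - 1). z \<subseteq> y \<inter> y'} =
    (if y = y' then s else if card (y \<union> y') = Suc s then 1 else 0)"
proof -
  have fin: "finite y" "finite y'" using assms tsubsets_finite_elem by auto
  have "{z \<in> tsubsets n (s - 1). z \<subseteq> y \<inter> y'} = {z. z \<subseteq> y \<inter> y' \<and> card z = s - 1}"
    using assms by (auto simp: tsubsets_def)
  then have c: "card {z \<in> tsubsets n (s - 1). z \<subseteq> y \<inter> y'} = card (y \<inter> y') choose (s - 1)"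
    using n_subsets[of "y \<inter> y'" "s - 1"] fin by simp
  have un_int: "card (y \<union> y') + card (y \<inter> y') = s + s"
    using card_Un_Int[OF fin] assms by (simp add: tsubsets_def)
  have "card (y \<inter> y') = s \<longleftrightarrow> y = y'"
    using assms(1,2) by (rule card_Int_tsubsets_eq_iff)
  moreover have "card (y \<inter> y') \<le> s" using assms(1) by (rule card_Int_tsubsets_le)
  ultimately show ?thesis
    using c un_int assms(3) binomial_symmetric[of "s - 1" s] by (auto simp: binomial_eq_0)
qed

lemma gram_incl:
  assumes "y \<in> tsubsets n s" "y' \<in> tsubsets n s" "1 \<le> s" "s < n"
  shows "kmult (tsubsets n (Suc s)) (ktrans incl) incl y y' =
    kmult (tsubsets n (s - 1)) incl (ktrans incl) y y' + (real n - 2 * real s) * kdelta y y'"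
proof -
  have "kmult (tsubsets n (Suc s)) (ktrans incl) incl y y' = card {x \<in> tsubsets n (Suc s). y \<union> y' \<subseteq> x}"
    by (simp add: kmult_def ktrans_def incl_def of_bool_conj[symmetric] Int_def)
  moreover have "kmult (tsubsets n (s - 1)) incl (ktrans incl) y y' = card {z \<in> tsubsets n (s - 1). z \<subseteq> y \<inter> y'}"
    by (simp add: kmult_def ktrans_def incl_def of_bool_conj[symmetric] Collect_conj_eq Int_assoc)
  ultimately show ?thesis
    using card_common_supersets[OF assms(1,2,4)] card_common_subsets[OF assms(1-3)] assms(4)
    by (simp add: kdelta_def)
qed

lemma sum_sq_incl_up_down:
  assumes "1 \<le> s" "s < n"
  shows "(\<Sum>x\<in>tsubsets n (Suc s). (\<Sum>y\<in>tsubsets n s. incl x y * f y)\<^sup>2) =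
    (\<Sum>z\<in>tsubsets n (s - 1). (\<Sum>y\<in>tsubsets n s. incl y z * f y)\<^sup>2)
    + (real n - 2 * real s) * (\<Sum>y\<in>tsubsets n s. (f y)\<^sup>2)"
proof -
  let ?X = "tsubsets n (Suc s)" and ?Y = "tsubsets n s" and ?Z = "tsubsets n (s - 1)"
  have gram: "(\<Sum>x\<in>?X. incl x y * incl x y') =
      (\<Sum>z\<in>?Z. incl y z * incl y' z) + (real n - 2 * real s) * kdelta y y'"
    if "y \<in> ?Y" "y' \<in> ?Y" for y y'
    using gram_incl[OF that assms] by (simp add: kmult_def ktrans_def)
  have "(\<Sum>x\<in>?X. (\<Sum>y\<in>?Y. incl x y * f y)\<^sup>2)
      = (\<Sum>y\<in>?Y. \<Sum>y'\<in>?Y. f y * f y' * (\<Sum>x\<in>?X. incl x y * incl x y'))"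
    by (rule sum_sq_kernel_apply)
  also have "\<dots> = (\<Sum>y\<in>?Y. \<Sum>y'\<in>?Y. f y * f y' * (\<Sum>z\<in>?Z. incl y z * incl y' z)
      + (real n - 2 * real s) * (f y * (kdelta y y' * f y')))"
    by (intro sum.cong refl) (simp add: gram algebra_simps)
  also have "\<dots> = (\<Sum>y\<in>?Y. \<Sum>y'\<in>?Y. f y * f y' * (\<Sum>z\<in>?Z. incl y z * incl y' z))
      + (real n - 2 * real s) * (\<Sum>y\<in>?Y. f y * (\<Sum>y'\<in>?Y. kdelta y y' * f y'))"
    by (simp add: sum.distrib sum_distrib_left)
  also have "\<dots> = (\<Sum>z\<in>?Z. (\<Sum>y\<in>?Y. incl y z * f y)\<^sup>2) + (real n - 2 * real s) * (\<Sum>y\<in>?Y. (f y)\<^sup>2)"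
    by (simp only: sum_sq_kernel_apply[of "\<lambda>z y. incl y z"]) (simp add: sum_kdelta_left power2_eq_square)
  finally show ?thesis .
qed

lemma incl_kernel_injective:
  assumes "2 * s < n"
  shows "kernel_injective (tsubsets n (Suc s)) (tsubsets n s) incl"
  unfolding kernel_injective_def
proof (intro allI impI ballI)
  fix f y
  assume f: "\<forall>x\<in>tsubsets n (Suc s). (\<Sum>y\<in>tsubsets n s. incl x y * f y) = 0" and y: "y \<in> tsubsets n s"
  show "f y = 0"
  proof (cases "s = 0")
    case True
    have "{1} \<in> tsubsets n (Suc s)" using assms True by (auto simp: tsubsets_def)
    then show ?thesis using f y True by (auto simp: tsubsets_0 incl_def)
  next
    case False
    let ?down = "\<Sum>z\<in>tsubsets n (s - 1). (\<Sum>y\<in>tsubsets n s. incl y z * f y)\<^sup>2"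
      and ?norm = "\<Sum>y\<in>tsubsets n s. (f y)\<^sup>2"
    have "0 = ?down + (real n - 2 * real s) * ?norm"
      using sum_sq_incl_up_down[of s n f] f False assms by simp
    moreover have "?down \<ge> 0" "?norm \<ge> 0" by (simp_all add: sum_nonneg)
    moreover have "real n - 2 * real s > 0" using assms by linarith
    ultimately have "(real n - 2 * real s) * ?norm = 0"
      using mult_nonneg_nonneg[of "real n - 2 * real s" ?norm] by linarith
    then have "?norm = 0" using \<open>real n - 2 * real s > 0\<close> by simp
    then show "f y = 0" using y by (subst (asm) sum_nonneg_eq_0_iff) auto
  qed
qed

lemma annihilator_incl_lower:
  assumes ann: "\<And>w. w \<in> tsubsets n s \<Longrightarrow> (\<Sum>y\<in>tsubsets n (Suc s). incl y w * f y) = 0"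
    and "i \<le> s" "z \<in> tsubsets n i"
  shows "(\<Sum>y\<in>tsubsets n (Suc s). incl y z * f y) = 0"
  using assms(2,3)
proof (induction i arbitrary: z rule: inc_induct)
  case base
  then show ?case by (rule ann)
next
  case (step i)
  let ?Y = "tsubsets n (Suc s)"
  have "real (Suc s - i) * (\<Sum>y\<in>?Y. incl y z * f y)
      = (\<Sum>y\<in>?Y. f y * (\<Sum>w\<in>tsubsets n (Suc i). incl w z * incl y w))"
    using sum_incl_between[OF step.prems _ le_SucI[OF order.refl]]
    by (simp add: sum_distrib_left mult_ac)
  also have "\<dots> = (\<Sum>w\<in>tsubsets n (Suc i). incl w z * (\<Sum>y\<in>?Y. incl y w * f y))"
    by (simp add: sum_distrib_left mult_ac) (subst sum.swap, simp add: mult_ac)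
  also have "\<dots> = 0" using step.IH by simp
  finally show ?case using step.hyps by simp
qed

lemma sum_choose_card_Int_annihilator:
  assumes ann: "\<And>w. w \<in> tsubsets n s \<Longrightarrow> (\<Sum>y\<in>tsubsets n (Suc s). incl y w * f y) = 0"
    and x: "x \<in> tsubsets n (Suc s)" and "i \<le> Suc s"
  shows "(\<Sum>y\<in>tsubsets n (Suc s). real (card (x \<inter> y) choose i) * f y) = (if i = Suc s then f x else 0)"
proof (cases "i = Suc s")
  case True
  have "real (card (x \<inter> y) choose i) = kdelta x y" if "y \<in> tsubsets n (Suc s)" for y
    using card_Int_tsubsets_le[OF x, of y] card_Int_tsubsets_eq_iff[OF x that] True
    by (auto simp: kdelta_def binomial_eq_0)
  then show ?thesis using x True by (simp add: sum_kdelta_left)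
next
  case False
  have "(\<Sum>y\<in>tsubsets n (Suc s). real (card (x \<inter> y) choose i) * f y)
      = (\<Sum>z\<in>tsubsets n i. incl x z * (\<Sum>y\<in>tsubsets n (Suc s). incl y z * f y))"
    by (simp add: card_Int_choose_eq_sum_incl[OF x] sum_distrib_left sum_distrib_right mult_ac)
      (rule sum.swap)
  also have "\<dots> = 0"
  proof -
    have "i \<le> s" using False assms(3) by simp
    then show ?thesis by (simp add: annihilator_incl_lower[OF ann])
  qed
  finally show ?thesis using False by simp
qed

section \<open>The kernel induced by a class function on \<open>S\<^sub>n\<close>\<close>

definition action_kernel :: "nat \<Rightarrow> ((nat \<Rightarrow> nat) \<Rightarrow> real) \<Rightarrow> nat set \<Rightarrow> nat set \<Rightarrow> real" where
  "action_kernel n P x y = (\<Sum>g\<in>Sym n. P g * kdelta (g ` x) y)"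

definition conj_invariant :: "nat \<Rightarrow> ((nat \<Rightarrow> nat) \<Rightarrow> real) \<Rightarrow> bool" where
  "conj_invariant n P \<longleftrightarrow> (\<forall>\<sigma>\<in>Sym n. \<forall>g\<in>Sym n. P (\<sigma> \<circ> g \<circ> inv \<sigma>) = P g)"

lemma finite_Sym [simp]: "finite (Sym n)"
  unfolding Sym_def by (rule finite_permutations) simp

lemma id_Sym [simp]: "id \<in> Sym n"
  by (simp add: Sym_def permutes_id)

lemma inv_Sym: "g \<in> Sym n \<Longrightarrow> inv g \<in> Sym n"
  unfolding Sym_def by (simp add: permutes_inv)

lemma Sym_image_inv_image:
  assumes "g \<in> Sym n"
  shows "g ` inv g ` A = A" "inv g ` g ` A = A"
  using permutes_inv_o[of g "{1..n}"] assms by (simp_all add: Sym_def image_comp)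

lemma Sym_image_eq_iff:
  assumes "g \<in> Sym n"
  shows "g ` x = y \<longleftrightarrow> x = inv g ` y"
  using Sym_image_inv_image(1)[OF assms, of y] Sym_image_inv_image(2)[OF assms, of x] by blast

lemma Sym_image_subset_iff: "g \<in> Sym n \<Longrightarrow> inv g ` y \<subseteq> x \<longleftrightarrow> y \<subseteq> g ` x"
  using Sym_image_inv_image[of g n] image_mono[of "inv g ` y" x g] image_mono[of y "g ` x" "inv g"]
  by auto

lemma image_tsubsets:
  assumes "g \<in> Sym n" "x \<in> tsubsets n t"
  shows "g ` x \<in> tsubsets n t"
proof -
  have "g permutes {1..n}" using assms(1) by (simp add: Sym_def)
  then show ?thesis
    using assms(2) permutes_image[of g "{1..n}"] permutes_inj[of g "{1..n}"]
    by (auto simp: tsubsets_def card_image inj_on_subset)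
qed

lemma bij_betw_image_tsubsets: "g \<in> Sym n \<Longrightarrow> bij_betw ((`) g) (tsubsets n t) (tsubsets n t)"
  by (rule bij_betw_byWitness[where f' = "(`) (inv g)"])
    (auto simp: Sym_image_inv_image image_tsubsets inv_Sym)

lemma action_kernel_row_sum:
  assumes "(\<Sum>g\<in>Sym n. P g) = 1" "x \<in> tsubsets n t"
  shows "(\<Sum>y\<in>tsubsets n t. action_kernel n P x y) = 1"
proof -
  have "(\<Sum>y\<in>tsubsets n t. action_kernel n P x y) = (\<Sum>g\<in>Sym n. P g * (\<Sum>y\<in>tsubsets n t. kdelta (g ` x) y))"
    unfolding action_kernel_def by (subst sum.swap) (simp add: sum_distrib_left)
  also have "\<dots> = 1"
    using assms by (simp add: sum_kdelta image_tsubsets)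
  finally show ?thesis .
qed

lemma sum_kdelta_image:
  assumes "g \<in> Sym n" "y \<in> tsubsets n t"
  shows "(\<Sum>y'\<in>tsubsets n t. h y' * kdelta (g ` y') y) = h (inv g ` y)"
proof -
  have "(\<Sum>y'\<in>tsubsets n t. h y' * kdelta (g ` y') y) = (\<Sum>y'\<in>tsubsets n t. h y' * kdelta y' (inv g ` y))"
    using Sym_image_eq_iff[OF assms(1)] by (simp add: kdelta_def)
  also have "\<dots> = h (inv g ` y)"
    using assms by (intro sum_kdelta_right) (simp_all add: image_tsubsets inv_Sym)
  finally show ?thesis .
qed

lemma action_kernel_incl:
  assumes x: "x \<in> tsubsets n (Suc s)" and y: "y \<in> tsubsets n s"
  shows "kmult (tsubsets n (Suc s)) (action_kernel n P) incl x y = kmult (tsubsets n s) incl (action_kernel n P) x y"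
proof -
  have "kmult (tsubsets n (Suc s)) (action_kernel n P) incl x y
      = (\<Sum>g\<in>Sym n. P g * (\<Sum>x'\<in>tsubsets n (Suc s). kdelta (g ` x) x' * incl x' y))"
    unfolding kmult_def action_kernel_def
    by (simp add: sum_distrib_right sum_distrib_left mult.assoc) (rule sum.swap)
  also have "\<dots> = (\<Sum>g\<in>Sym n. P g * incl x (inv g ` y))"
  proof (intro sum.cong refl)
    fix g assume g: "g \<in> Sym n"
    have "(\<Sum>x'\<in>tsubsets n (Suc s). kdelta (g ` x) x' * incl x' y) = incl (g ` x) y"
      using g x by (intro sum_kdelta_left) (simp_all add: image_tsubsets)
    also have "\<dots> = incl x (inv g ` y)"
      using Sym_image_subset_iff[OF g] by (simp add: incl_def)
    finally show "P g * (\<Sum>x'\<in>tsubsets n (Suc s). kdelta (g ` x) x' * incl x' y) = P g * incl x (inv g ` y)"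
      by simp
  qed
  also have "\<dots> = (\<Sum>g\<in>Sym n. P g * (\<Sum>y'\<in>tsubsets n s. incl x y' * kdelta (g ` y') y))"
    using y by (simp add: sum_kdelta_image)
  also have "\<dots> = kmult (tsubsets n s) incl (action_kernel n P) x y"
    unfolding kmult_def action_kernel_def
    by (simp add: sum_distrib_right sum_distrib_left mult_ac) (rule sum.swap)
  finally show ?thesis .
qed

lemma action_kernel_conv:
  assumes x: "x \<in> tsubsets n t"
  shows "action_kernel n (conv n P R) x y = kmult (tsubsets n t) (action_kernel n R) (action_kernel n P) x y"
proof -
  have "action_kernel n (conv n P R) x y = (\<Sum>g\<in>Sym n. R g * (\<Sum>h\<in>Sym n. P (h \<circ> inv g) * kdelta (h ` x) y))"
    unfolding action_kernel_def conv_def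
    by (simp add: sum_distrib_right sum_distrib_left mult_ac) (rule sum.swap)
  also have "\<dots> = (\<Sum>g\<in>Sym n. R g * action_kernel n P (g ` x) y)"
  proof (intro sum.cong refl)
    fix g assume g: "g \<in> Sym n"
    then have "g permutes {1..n}" by (simp add: Sym_def)
    then have "(\<Sum>h\<in>Sym n. P (h \<circ> inv g) * kdelta (h ` x) y)
        = (\<Sum>h\<in>Sym n. P (h \<circ> g \<circ> inv g) * kdelta ((h \<circ> g) ` x) y)"
      unfolding Sym_def by (rule sum_permutations_compose_right)
    also have "\<dots> = action_kernel n P (g ` x) y"
      using permutes_inv_o(1)[OF \<open>g permutes {1..n}\<close>]
      by (simp add: action_kernel_def comp_assoc image_comp)
    finally show "R g * (\<Sum>h\<in>Sym n. P (h \<circ> inv g) * kdelta (h ` x) y) = R g * action_kernel n P (g ` x) y"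
      by simp
  qed
  also have "\<dots> = (\<Sum>g\<in>Sym n. R g * (\<Sum>z\<in>tsubsets n t. kdelta (g ` x) z * action_kernel n P z y))"
    using x by (simp add: sum_kdelta_left image_tsubsets)
  also have "\<dots> = kmult (tsubsets n t) (action_kernel n R) (action_kernel n P) x y"
    unfolding kmult_def action_kernel_def
    by (simp add: sum_distrib_right sum_distrib_left mult_ac) (rule sum.swap)
  finally show ?thesis .
qed

lemma action_kernel_conv_pow:
  "x \<in> tsubsets n t \<Longrightarrow> action_kernel n (conv_pow n P N) x y = kpow (tsubsets n t) (action_kernel n P) N x y"
proof (induction N arbitrary: x y)
  case 0
  have "action_kernel n (conv_pow n P 0) x y = (\<Sum>g\<in>Sym n. if g = id then kdelta (g ` x) y else 0)"
    unfolding action_kernel_def by (intro sum.cong refl) simp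
  then show ?case by simp
next
  case (Suc N)
  then show ?case
    by (simp add: action_kernel_conv) (intro kmult_cong refl, simp)
qed

lemma action_kernel_conj_invariant:
  assumes P: "conj_invariant n P" and \<sigma>: "\<sigma> \<in> Sym n"
  shows "action_kernel n P (\<sigma> ` x) (\<sigma> ` y) = action_kernel n P x y"
proof -
  have perm: "\<sigma> permutes {1..n}" "inv \<sigma> permutes {1..n}"
    using \<sigma> inv_Sym[OF \<sigma>] by (simp_all add: Sym_def)
  have "action_kernel n P (\<sigma> ` x) (\<sigma> ` y)
      = (\<Sum>h\<in>Sym n. P (\<sigma> \<circ> h \<circ> inv \<sigma>) * kdelta ((\<sigma> \<circ> h \<circ> inv \<sigma>) ` \<sigma> ` x) (\<sigma> ` y))"
    unfolding action_kernel_def Sym_def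
    by (subst setum_permutations_compose_left[OF perm(1)], subst sum_permutations_compose_right[OF perm(2)])
      (simp add: comp_assoc)
  also have "\<dots> = action_kernel n P x y"
    unfolding action_kernel_def
  proof (intro sum.cong refl)
    fix h assume h: "h \<in> Sym n"
    have "(\<sigma> \<circ> h \<circ> inv \<sigma>) ` \<sigma> ` x = \<sigma> ` h ` x"
      by (simp only: image_comp[symmetric] Sym_image_inv_image(2)[OF \<sigma>])
    moreover have "\<sigma> ` h ` x = \<sigma> ` y \<longleftrightarrow> h ` x = y"
      using permutes_inj[OF perm(1)] by (simp add: inj_image_eq_iff)
    ultimately show "P (\<sigma> \<circ> h \<circ> inv \<sigma>) * kdelta ((\<sigma> \<circ> h \<circ> inv \<sigma>) ` \<sigma> ` x) (\<sigma> ` y) = P h * kdelta (h ` x) y"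
      using P \<sigma> h by (simp add: conj_invariant_def kdelta_def)
  qed
  finally show ?thesis .
qed

lemma exists_permutes_same_fibres:
  assumes "finite A" and fibres: "\<And>c. card {z \<in> A. f z = c} = card {z \<in> A. f' z = c}"
  obtains p where "p permutes A" "\<forall>z\<in>A. f z = f' (p z)"
proof -
  have "image_mset f (mset_set A) = image_mset f' (mset_set A)"
    by (rule multiset_eqI) (simp add: count_image_mset_eq_card_vimage[OF assms(1)] fibres)
  with image_mset_eq_implies_permutes[OF assms(1)] that show thesis by blast
qed

lemma permutes_image_eq:
  assumes p: "p permutes A" and "u \<subseteq> A" "v \<subseteq> A" and uv: "\<And>z. z \<in> A \<Longrightarrow> z \<in> u \<longleftrightarrow> p z \<in> v"
  shows "p ` u = v"
proof
  show "p ` u \<subseteq> v" using assms(2) uv by blast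
  show "v \<subseteq> p ` u"
  proof
    fix w assume w: "w \<in> v"
    have "inv p w \<in> A"
      using permutes_in_image[OF permutes_inv[OF p]] w assms(3) by blast
    moreover have "p (inv p w) = w" by (rule permutes_inverses(1)[OF p])
    ultimately show "w \<in> p ` u" using uv w by (metis image_eqI)
  qed
qed

lemma card_Venn_region:
  assumes "finite A" "u \<subseteq> A" "v \<subseteq> A"
  shows "card {z \<in> A. (z \<in> u, z \<in> v) = (b1, b2)} =
    (if b1 then if b2 then card (u \<inter> v) else card u - card (u \<inter> v)
     else if b2 then card v - card (u \<inter> v) else card A - card (u \<union> v))"
proof -
  have fin: "finite u" "finite v" using assms finite_subset by blast+
  consider "b1" "b2" | "b1" "\<not> b2" | "\<not> b1" "b2" | "\<not> b1" "\<not> b2" by blast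
  then show ?thesis
  proof cases
    case 1
    then have "{z \<in> A. (z \<in> u, z \<in> v) = (b1, b2)} = u \<inter> v" using assms by auto
    then show ?thesis using 1 by simp
  next
    case 2
    then have "{z \<in> A. (z \<in> u, z \<in> v) = (b1, b2)} = u - v" using assms by auto
    then show ?thesis using 2 fin by (simp add: card_Diff_subset_Int)
  next
    case 3
    then have "{z \<in> A. (z \<in> u, z \<in> v) = (b1, b2)} = v - u" using assms by auto
    then show ?thesis using 3 fin by (simp add: card_Diff_subset_Int Int_commute)
  next
    case 4
    then have "{z \<in> A. (z \<in> u, z \<in> v) = (b1, b2)} = A - (u \<union> v)" using assms by auto
    then show ?thesis using 4 fin assms by (simp add: card_Diff_subset)
  qed
qed

text \<open>Colour each point by its membership in the two sets: equal sizes of the colour classes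
  yield a permutation carrying one colouring to the other.\<close>

lemma Sym_transitive_on_pairs:
  assumes sub: "x \<subseteq> {1..n}" "y \<subseteq> {1..n}" "x' \<subseteq> {1..n}" "y' \<subseteq> {1..n}"
    and card: "card x = card x'" "card y = card y'" "card (x \<inter> y) = card (x' \<inter> y')"
  obtains \<sigma> where "\<sigma> \<in> Sym n" "\<sigma> ` x = x'" "\<sigma> ` y = y'"
proof -
  let ?A = "{1..n::nat}"
  have fin: "finite x" "finite y" "finite x'" "finite y'"
    using sub finite_subset by blast+
  have card_Un: "card (x \<union> y) = card (x' \<union> y')"
    using card_Un_Int[OF fin(1,2)] card_Un_Int[OF fin(3,4)] card by simp
  have "card {z \<in> ?A. (z \<in> x', z \<in> y') = c} = card {z \<in> ?A. (z \<in> x, z \<in> y) = c}" for c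
    using card_Venn_region[OF _ sub(1,2)] card_Venn_region[OF _ sub(3,4)] card card_Un by (cases c) simp
  then obtain p where p: "p permutes ?A" "\<forall>z\<in>?A. (z \<in> x, z \<in> y) = (p z \<in> x', p z \<in> y')"
    using exists_permutes_same_fibres[of ?A "\<lambda>z. (z \<in> x, z \<in> y)" "\<lambda>z. (z \<in> x', z \<in> y')"] by auto
  have "p \<in> Sym n" using p(1) by (simp add: Sym_def)
  moreover have "p ` x = x'" "p ` y = y'"
    using permutes_image_eq[OF p(1) sub(1,3)] permutes_image_eq[OF p(1) sub(2,4)] p(2) by simp_all
  ultimately show thesis by (rule that)
qed

lemma action_kernel_eq_if_card_Int_eq:
  assumes P: "conj_invariant n P"
    and "x \<in> tsubsets n t" "y \<in> tsubsets n t" "x' \<in> tsubsets n t" "y' \<in> tsubsets n t"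
    and "card (x \<inter> y) = card (x' \<inter> y')"
  shows "action_kernel n P x y = action_kernel n P x' y'"
proof -
  obtain \<sigma> where "\<sigma> \<in> Sym n" "\<sigma> ` x = x'" "\<sigma> ` y = y'"
    using Sym_transitive_on_pairs[of x n y x' y'] assms(2-6) by (auto simp: tsubsets_def)
  then show ?thesis using action_kernel_conj_invariant[OF P] by metis
qed

lemma kpow_action_kernel_conj_invariant:
  assumes "conj_invariant n P" "\<sigma> \<in> Sym n" "x \<in> tsubsets n t" "y \<in> tsubsets n t"
  shows "kpow (tsubsets n t) (action_kernel n P) m (\<sigma> ` x) (\<sigma> ` y) = kpow (tsubsets n t) (action_kernel n P) m x y"
  using assms by (intro kpow_bij_invariant bij_betw_image_tsubsets action_kernel_conj_invariant)

lemma kpow_action_kernel_symmetric: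
  assumes "conj_invariant n P" "x \<in> tsubsets n t" "y \<in> tsubsets n t"
  shows "kpow (tsubsets n t) (action_kernel n P) m x y = kpow (tsubsets n t) (action_kernel n P) m y x"
proof -
  obtain \<sigma> where "\<sigma> \<in> Sym n" "\<sigma> ` x = y" "\<sigma> ` y = x"
    using Sym_transitive_on_pairs[of x n y y x] assms(2,3) by (auto simp: tsubsets_def Int_commute)
  then show ?thesis using kpow_action_kernel_conj_invariant[OF assms(1) _ assms(2,3)] by metis
qed

lemma kpow_action_kernel_diagonal:
  assumes "conj_invariant n P" "x \<in> tsubsets n t" "x0 \<in> tsubsets n t"
  shows "kpow (tsubsets n t) (action_kernel n P) m x x = kpow (tsubsets n t) (action_kernel n P) m x0 x0"
proof -
  obtain \<sigma> where "\<sigma> \<in> Sym n" "\<sigma> ` x0 = x"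
    using Sym_transitive_on_pairs[of x0 n x0 x x] assms(2,3) by (auto simp: tsubsets_def)
  then show ?thesis using kpow_action_kernel_conj_invariant[OF assms(1) _ assms(3,3)] by metis
qed

lemma bij_betw_snd_tabloids:
  assumes "a + b = n"
  shows "bij_betw snd (tabloids n a b) (tsubsets n b)"
proof (rule bij_betw_byWitness[where f' = "\<lambda>B. ({1..n} - B, B)"])
  show "\<forall>p\<in>tabloids n a b. ({1..n} - snd p, snd p) = p"
    by (auto simp: tabloids_def)
  show "(\<lambda>B. ({1..n} - B, B)) ` tsubsets n b \<subseteq> tabloids n a b"
  proof safe
    fix B assume B: "B \<in> tsubsets n b"
    then have "card ({1..n} - B) = a"
      using assms tsubsets_finite_elem[OF B] by (simp add: tsubsets_def card_Diff_subset)
    then show "({1..n} - B, B) \<in> tabloids n a b" using B by (auto simp: tabloids_def tsubsets_def)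
  qed
qed (auto simp: tabloids_def tsubsets_def)

lemma act_vec_eq_action_kernel:
  assumes x0: "x0 \<in> tabloids n a b" and x: "x \<in> tabloids n a b"
  shows "act_vec n P x0 x = action_kernel n P (snd x0) (snd x)"
proof -
  have complement: "fst z = {1..n} - snd z" if "z \<in> tabloids n a b" for z
    using that by (auto simp: tabloids_def)
  have act_iff: "act g x0 = x \<longleftrightarrow> g ` snd x0 = snd x" if g: "g \<in> Sym n" for g
  proof -
    have "g permutes {1..n}" using g by (simp add: Sym_def)
    then have "g ` fst x0 = {1..n} - g ` snd x0"
      by (simp add: complement[OF x0] image_set_diff permutes_inj permutes_image)
    then show ?thesis
      using complement[OF x] by (auto simp: act_def prod_eq_iff)
  qed
  have "act_vec n P x0 x = sum P {g \<in> Sym n. g ` snd x0 = snd x}"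
    unfolding act_vec_def by (intro sum.cong refl Collect_cong) (use act_iff in blast)
  also have "\<dots> = action_kernel n P (snd x0) (snd x)"
    unfolding action_kernel_def by (simp add: sum.inter_filter) (intro sum.cong refl, simp add: kdelta_def)
  finally show ?thesis .
qed

section \<open>Eigenvalues and the total variation bound\<close>

lemma binomial_basis_expansion:
  fixes \<omega> :: "nat \<Rightarrow> real"
  obtains \<beta> where "\<And>j. j \<le> t \<Longrightarrow> \<omega> j = (\<Sum>i\<le>t. \<beta> i * real (j choose i))"
proof (induction t arbitrary: thesis)
  case 0
  show ?case by (rule 0[of "\<lambda>_. \<omega> 0"]) simp
next
  case (Suc t)
  obtain \<beta> where \<beta>: "\<And>j. j \<le> t \<Longrightarrow> \<omega> j = (\<Sum>i\<le>t. \<beta> i * real (j choose i))"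
    using Suc.IH by blast
  define \<beta>' where "\<beta>' = \<beta>(Suc t := \<omega> (Suc t) - (\<Sum>i\<le>t. \<beta> i * real (Suc t choose i)))"
  have "\<omega> j = (\<Sum>i\<le>Suc t. \<beta>' i * real (j choose i))" if "j \<le> Suc t" for j
  proof -
    have "(\<Sum>i\<le>t. \<beta>' i * real (j choose i)) = (\<Sum>i\<le>t. \<beta> i * real (j choose i))"
      by (intro sum.cong) (auto simp: \<beta>'_def)
    then show ?thesis
      using that \<beta>[of j] by (cases "j = Suc t") (auto simp: \<beta>'_def binomial_eq_0)
  qed
  then show ?case by (rule Suc.prems)
qed

lemma action_kernel_function_of_card_Int:
  assumes "conj_invariant n P"
  obtains \<omega> where "\<And>x y. x \<in> tsubsets n t \<Longrightarrow> y \<in> tsubsets n t \<Longrightarrow> action_kernel n P x y = \<omega> (card (x \<inter> y))"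
proof -
  have "\<exists>v. \<forall>x\<in>tsubsets n t. \<forall>y\<in>tsubsets n t. card (x \<inter> y) = j \<longrightarrow> action_kernel n P x y = v" for j
  proof (cases "\<exists>x0\<in>tsubsets n t. \<exists>y0\<in>tsubsets n t. card (x0 \<inter> y0) = j")
    case True
    then obtain x0 y0 where "x0 \<in> tsubsets n t" "y0 \<in> tsubsets n t" "card (x0 \<inter> y0) = j" by blast
    then show ?thesis
      using action_kernel_eq_if_card_Int_eq[OF assms] by blast
  qed blast
  then obtain \<omega> where "\<forall>j. \<forall>x\<in>tsubsets n t. \<forall>y\<in>tsubsets n t. card (x \<inter> y) = j \<longrightarrow> action_kernel n P x y = \<omega> j"
    by metis
  then show thesis using that by blast
qed

lemma action_kernel_annihilator_eigen:
  assumes "conj_invariant n P"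
  obtains \<mu> where "\<And>f x. (\<And>w. w \<in> tsubsets n s \<Longrightarrow> (\<Sum>y\<in>tsubsets n (Suc s). incl y w * f y) = 0) \<Longrightarrow>
      x \<in> tsubsets n (Suc s) \<Longrightarrow> (\<Sum>x'\<in>tsubsets n (Suc s). action_kernel n P x x' * f x') = \<mu> * f x"
proof -
  let ?X = "tsubsets n (Suc s)"
  obtain \<omega> where \<omega>: "\<And>x y. x \<in> ?X \<Longrightarrow> y \<in> ?X \<Longrightarrow> action_kernel n P x y = \<omega> (card (x \<inter> y))"
    using action_kernel_function_of_card_Int[OF assms] by blast
  obtain \<beta> where \<beta>: "\<And>j. j \<le> Suc s \<Longrightarrow> \<omega> j = (\<Sum>i\<le>Suc s. \<beta> i * real (j choose i))"
    using binomial_basis_expansion by blast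
  show thesis
  proof (rule that[of "\<beta> (Suc s)"])
    fix f x
    assume ann: "\<And>w. w \<in> tsubsets n s \<Longrightarrow> (\<Sum>y\<in>?X. incl y w * f y) = 0" and x: "x \<in> ?X"
    have "(\<Sum>x'\<in>?X. action_kernel n P x x' * f x')
        = (\<Sum>x'\<in>?X. \<Sum>i\<le>Suc s. \<beta> i * (real (card (x \<inter> x') choose i) * f x'))"
      using x by (intro sum.cong refl)
        (simp add: \<omega> \<beta> card_Int_tsubsets_le sum_distrib_right mult.assoc del: sum.atMost_Suc)
    also have "\<dots> = (\<Sum>i\<le>Suc s. \<beta> i * (\<Sum>x'\<in>?X. real (card (x \<inter> x') choose i) * f x'))"
      by (subst sum.swap) (simp add: sum_distrib_left)
    also have "\<dots> = \<beta> (Suc s) * f x"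
      by (simp add: sum_choose_card_Int_annihilator[OF ann x] if_distrib[of "\<lambda>c. _ * c"] cong: if_cong)
    finally show "(\<Sum>x'\<in>?X. action_kernel n P x x' * f x') = \<beta> (Suc s) * f x" .
  qed
qed

lemma ktrace_kpow_action_kernel_step:
  assumes "conj_invariant n P" "2 * s < n"
  obtains \<mu> where "\<And>m. ktrace (tsubsets n (Suc s)) (kpow (tsubsets n (Suc s)) (action_kernel n P) m) =
      ktrace (tsubsets n s) (kpow (tsubsets n s) (action_kernel n P) m)
      + \<mu> ^ m * (real (n choose Suc s) - real (n choose s))"
proof -
  obtain \<mu> where \<mu>: "\<And>f x. (\<And>w. w \<in> tsubsets n s \<Longrightarrow> (\<Sum>y\<in>tsubsets n (Suc s). incl y w * f y) = 0) \<Longrightarrow>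
      x \<in> tsubsets n (Suc s) \<Longrightarrow> (\<Sum>x'\<in>tsubsets n (Suc s). action_kernel n P x x' * f x') = \<mu> * f x"
    using action_kernel_annihilator_eigen[OF assms(1)] by blast
  show thesis
  proof (rule that[of \<mu>])
    fix m
    show "ktrace (tsubsets n (Suc s)) (kpow (tsubsets n (Suc s)) (action_kernel n P) m) =
      ktrace (tsubsets n s) (kpow (tsubsets n s) (action_kernel n P) m)
      + \<mu> ^ m * (real (n choose Suc s) - real (n choose s))"
      using ktrace_kpow_intertwined[OF finite_tsubsets finite_tsubsets incl_kernel_injective[OF assms(2)]
          action_kernel_incl \<mu>]
      by (simp add: card_tsubsets)
  qed
qed

text \<open>\<open>specht_dim n j\<close> is the dimension of the Specht module \<open>S\<^bsup>(n-j,j)\<^esup>\<close>, realised as the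
  functions on \<open>j\<close>-subsets annihilated by the transpose of \<open>incl\<close>; \<open>specht_eigenvalue n P j\<close> is the
  scalar by which the action kernel of \<open>P\<close> acts on it.\<close>

definition specht_dim :: "nat \<Rightarrow> nat \<Rightarrow> real" where
  "specht_dim n j = real (n choose j) - real (n choose (j - 1))"

definition specht_eigenvalue :: "nat \<Rightarrow> ((nat \<Rightarrow> nat) \<Rightarrow> real) \<Rightarrow> nat \<Rightarrow> real" where
  "specht_eigenvalue n P j =
    (ktrace (tsubsets n j) (action_kernel n P) - ktrace (tsubsets n (j - 1)) (action_kernel n P)) / specht_dim n j"

lemma specht_dim_pos:
  assumes "1 \<le> j" "2 * j \<le> n"
  shows "specht_dim n j > 0"
proof -
  obtain i where j: "j = Suc i" using assms(1) by (cases j) auto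
  have "n - i = Suc (n - j)" using assms j by simp
  then have "Suc i * (n choose j) = (n - i) * (n choose i)"
    using Suc_times_binomial_add[of i "n - j"] assms j by simp
  moreover have "Suc i < n - i" "n choose i > 0" using assms j by simp_all
  ultimately have "n choose i < n choose j"
    by (metis mult_less_cancel1 mult_less_mono1 zero_less_Suc)
  then show ?thesis using j by (simp add: specht_dim_def)
qed

lemma ktrace_kpow_action_kernel:
  assumes P: "conj_invariant n P" "(\<Sum>g\<in>Sym n. P g) = 1" and "2 * t \<le> n"
  shows "ktrace (tsubsets n t) (kpow (tsubsets n t) (action_kernel n P) m) =
    1 + (\<Sum>j=1..t. specht_eigenvalue n P j ^ m * specht_dim n j)"
  using assms(3)
proof (induction t)
  case 0
  have "action_kernel n P {} {} = 1" using P(2) by (simp add: action_kernel_def kdelta_def)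
  then have "kpow (tsubsets n 0) (action_kernel n P) m {} {} = 1"
    by (induction m) (simp_all add: tsubsets_0 kdelta_def kmult_def)
  then show ?case by (simp add: ktrace_def tsubsets_0)
next
  case (Suc t)
  let ?tr = "\<lambda>t m. ktrace (tsubsets n t) (kpow (tsubsets n t) (action_kernel n P) m)"
  obtain \<mu> where step: "\<And>m. ?tr (Suc t) m = ?tr t m + \<mu> ^ m * specht_dim n (Suc t)"
    using ktrace_kpow_action_kernel_step[OF P(1), of t] Suc.prems by (auto simp: specht_dim_def)
  have "specht_eigenvalue n P (Suc t) = \<mu>"
    using step[of 1, unfolded ktrace_kpow_1[OF finite_tsubsets]] specht_dim_pos[of "Suc t" n] Suc.prems
    by (simp add: specht_eigenvalue_def field_simps)
  then show ?case using step Suc by simp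
qed

lemma tv_unif_sq_le:
  fixes h :: "'x \<Rightarrow> real"
  assumes "finite X" "X \<noteq> {}" "(\<Sum>x\<in>X. h x) = 1"
  shows "(tv_unif X h)\<^sup>2 \<le> 1/4 * (real (card X) * (\<Sum>x\<in>X. (h x)\<^sup>2) - 1)"
proof -
  define c where "c = real (card X)"
  have c: "c > 0" using assms(1,2) by (simp add: c_def card_gt_0_iff)
  have "(\<Sum>x\<in>X. (h x - 1 / c)\<^sup>2) = (\<Sum>x\<in>X. (h x)\<^sup>2) - 2 / c * (\<Sum>x\<in>X. h x) + c * (1 / c)\<^sup>2"
    by (simp add: power2_diff sum.distrib sum_subtractf sum_distrib_left c_def)
  also have "\<dots> = (\<Sum>x\<in>X. (h x)\<^sup>2) - 1 / c"
    using assms(3) c by (simp add: power2_eq_square)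
  finally have sq: "c * (\<Sum>x\<in>X. (h x - 1 / c)\<^sup>2) = c * (\<Sum>x\<in>X. (h x)\<^sup>2) - 1"
    using c by (simp add: right_diff_distrib)
  have "(tv_unif X h)\<^sup>2 = 1/4 * (\<Sum>x\<in>X. \<bar>h x - 1 / c\<bar>)\<^sup>2"
    by (simp add: tv_unif_def c_def power2_eq_square)
  also have "\<dots> \<le> 1/4 * (c * (\<Sum>x\<in>X. (h x - 1 / c)\<^sup>2))"
    using sum_squared_le_sum_of_squares[of "\<lambda>x. \<bar>h x - 1 / c\<bar>" X] by (simp add: c_def mult.commute)
  finally show ?thesis using sq by (simp add: c_def)
qed

lemma tv_unif_bij_betw:
  assumes "bij_betw \<phi> X Y" "\<And>x. x \<in> X \<Longrightarrow> h x = h' (\<phi> x)"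
  shows "tv_unif X h = tv_unif Y h'"
  unfolding tv_unif_def bij_betw_same_card[OF assms(1)]
  using assms by (simp add: sum.reindex_bij_betw[OF assms(1), symmetric])

lemma card_mult_sum_sq_kpow_action_kernel:
  assumes P: "conj_invariant n P" and x0: "x0 \<in> tsubsets n t"
  shows "real (card (tsubsets n t)) * (\<Sum>y\<in>tsubsets n t. (kpow (tsubsets n t) (action_kernel n P) N x0 y)\<^sup>2)
    = ktrace (tsubsets n t) (kpow (tsubsets n t) (action_kernel n P) (N + N))"
proof -
  let ?L = "tsubsets n t" and ?K = "action_kernel n P"
  have "(\<Sum>y\<in>?L. (kpow ?L ?K N x0 y)\<^sup>2) = kmult ?L (kpow ?L ?K N) (kpow ?L ?K N) x0 x0"
    unfolding kmult_def power2_eq_square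
    by (intro sum.cong refl) (use kpow_action_kernel_symmetric[OF P x0] in metis)
  also have "\<dots> = kpow ?L ?K (N + N) x0 x0"
    using kpow_add[OF finite_tsubsets x0] by simp
  finally have "(\<Sum>y\<in>?L. (kpow ?L ?K N x0 y)\<^sup>2) = kpow ?L ?K (N + N) x0 x0" .
  moreover have "ktrace ?L (kpow ?L ?K (N + N)) = real (card ?L) * kpow ?L ?K (N + N) x0 x0"
    unfolding ktrace_def using kpow_action_kernel_diagonal[OF P _ x0] by simp
  ultimately show ?thesis by simp
qed

theorem tv_unif_action_sq_le:
  assumes P: "conj_invariant n P" "(\<Sum>g\<in>Sym n. P g) = 1"
    and "b \<le> a" "a + b = n" and x0: "x0 \<in> tabloids n a b"
  shows "(tv_unif (tabloids n a b) (act_vec n (conv_pow n P N) x0))\<^sup>2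
    \<le> 1/4 * (\<Sum>t=1..b. specht_eigenvalue n P t ^ (2 * N) * specht_dim n t)"
proof -
  let ?Y = "tsubsets n b" and ?K = "action_kernel n P"
  have bij: "bij_betw snd (tabloids n a b) ?Y" using assms(4) by (rule bij_betw_snd_tabloids)
  have B0: "snd x0 \<in> ?Y" using bij_betwE[OF bij] x0 by blast
  have "tv_unif (tabloids n a b) (act_vec n (conv_pow n P N) x0) = tv_unif ?Y (kpow ?Y ?K N (snd x0))"
    using bij by (rule tv_unif_bij_betw)
      (simp add: act_vec_eq_action_kernel[OF x0] action_kernel_conv_pow[OF B0])
  also have "(\<dots>)\<^sup>2 \<le> 1/4 * (real (card ?Y) * (\<Sum>y\<in>?Y. (kpow ?Y ?K N (snd x0) y)\<^sup>2) - 1)"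
    using B0 kpow_row_sum[OF finite_tsubsets action_kernel_row_sum[OF P(2)] B0]
    by (intro tv_unif_sq_le) auto
  also have "\<dots> = 1/4 * (ktrace ?Y (kpow ?Y ?K (N + N)) - 1)"
    by (simp add: card_mult_sum_sq_kpow_action_kernel[OF P(1) B0])
  also have "\<dots> = 1/4 * (\<Sum>t=1..b. specht_eigenvalue n P t ^ (2 * N) * specht_dim n t)"
    using ktrace_kpow_action_kernel[OF P, of b "N + N"] assms(3,4) by (simp add: mult_2)
  finally show ?thesis .
qed

section \<open>Random \<open>k\<close>-cycles\<close>

lemma kcycles_subset_Sym: "kcycles n k \<subseteq> Sym n"
  using cycle_permutes permutes_subset by (fastforce simp: kcycles_def Sym_def)

lemma kcycles_nonempty:
  assumes "k \<le> n"
  shows "kcycles n k \<noteq> {}"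
proof -
  have "cycle_of_list [1..<Suc k] \<in> kcycles n k"
    unfolding kcycles_def using assms by (intro CollectI exI[of _ "[1..<Suc k]"]) auto
  then show ?thesis by blast
qed

lemma conj_mem_kcycles:
  assumes \<sigma>: "\<sigma> \<in> Sym n" and g: "g \<in> kcycles n k"
  shows "\<sigma> \<circ> g \<circ> inv \<sigma> \<in> kcycles n k"
proof -
  obtain cs where cs: "distinct cs" "length cs = k" "set cs \<subseteq> {1..n}" "g = cycle_of_list cs"
    using g by (auto simp: kcycles_def)
  have perm: "\<sigma> permutes {1..n}" using \<sigma> by (simp add: Sym_def)
  have "\<sigma> \<circ> g \<circ> inv \<sigma> = cycle_of_list (map \<sigma> cs)"
    using conjugation_of_cycle[OF cs(1) permutes_bij[OF perm]] cs(4) by simp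
  moreover have "distinct (map \<sigma> cs)" "set (map \<sigma> cs) \<subseteq> {1..n}"
    using cs(1,3) permutes_inj[OF perm] permutes_image[OF perm]
    by (auto simp: distinct_map inj_on_subset)
  ultimately show ?thesis
    using cs(2) unfolding kcycles_def by (intro CollectI exI[of _ "map \<sigma> cs"]) auto
qed

lemma conj_invariant_Qcyc: "conj_invariant n (Qcyc n k)"
  unfolding conj_invariant_def
proof (intro ballI)
  fix \<sigma> g assume \<sigma>: "\<sigma> \<in> Sym n" and "g \<in> Sym n"
  have "g \<in> kcycles n k" if "\<sigma> \<circ> g \<circ> inv \<sigma> \<in> kcycles n k"
  proof -
    have "inv \<sigma> \<circ> (\<sigma> \<circ> g \<circ> inv \<sigma>) \<circ> inv (inv \<sigma>) \<in> kcycles n k"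
      using conj_mem_kcycles[OF inv_Sym[OF \<sigma>] that] .
    moreover have "inv \<sigma> \<circ> (\<sigma> \<circ> g \<circ> inv \<sigma>) \<circ> inv (inv \<sigma>) = g"
      using \<sigma> permutes_inv_inv[of \<sigma> "{1..n}"] permutes_inverses[of \<sigma> "{1..n}"]
      by (simp add: Sym_def fun_eq_iff)
    ultimately show ?thesis by simp
  qed
  then show "Qcyc n k (\<sigma> \<circ> g \<circ> inv \<sigma>) = Qcyc n k g"
    using conj_mem_kcycles[OF \<sigma>] by (auto simp: Qcyc_def)
qed

lemma sum_Qcyc: "k \<le> n \<Longrightarrow> (\<Sum>g\<in>Sym n. Qcyc n k g) = 1"
  using kcycles_subset_Sym kcycles_nonempty finite_subset[OF kcycles_subset_Sym finite_Sym]
  by (simp add: Qcyc_def sum.If_cases Int_absorb1)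

lemma funpow_image_eq:
  assumes "f ` x = x"
  shows "(f ^^ m) ` x = x"
proof (induction m)
  case (Suc m)
  have "(f ^^ Suc m) ` x = f ` (f ^^ m) ` x" by (simp add: image_comp)
  then show ?case using Suc assms by simp
qed simp

lemma permutes_image_disjoint:
  assumes "p permutes S" "u \<inter> S = {}"
  shows "p ` u = u"
proof -
  have "p ` u = id ` u"
    using assms permutes_not_in[OF assms(1)] by (intro image_cong) auto
  then show ?thesis by simp
qed

lemma cycle_of_list_image_eq_iff:
  assumes d: "distinct cs"
  shows "cycle_of_list cs ` x = x \<longleftrightarrow> x \<inter> set cs = {} \<or> set cs \<subseteq> x"
proof
  let ?c = "cycle_of_list cs" and ?k = "length cs"
  assume fix_x: "?c ` x = x"
  show "x \<inter> set cs = {} \<or> set cs \<subseteq> x"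
  proof (cases "x \<inter> set cs = {}")
    case False
    then obtain i where i: "i < ?k" "cs ! i \<in> x" by (auto simp: in_set_conv_nth)
    have "set cs \<subseteq> x"
    proof
      fix e assume "e \<in> set cs"
      then obtain j where j: "j < ?k" "cs ! j = e" by (auto simp: in_set_conv_nth)
      define m where "m = j + ?k - i"
      have "(?c ^^ m) (cs ! i) = map (?c ^^ m) cs ! i" by (rule nth_map[OF i(1), symmetric])
      also have "\<dots> = rotate m cs ! i" by (simp only: cyclic_rotation[OF d])
      also have "\<dots> = e" using i(1) j by (simp add: nth_rotate m_def)
      finally have "e \<in> (?c ^^ m) ` x" using i(2) by (metis imageI)
      then show "e \<in> x" by (simp only: funpow_image_eq[OF fix_x])
    qed
    then show ?thesis by blast
  qed simp
next
  let ?c = "cycle_of_list cs"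
  have perm: "?c permutes set cs" by (rule cycle_permutes)
  assume "x \<inter> set cs = {} \<or> set cs \<subseteq> x"
  then show "?c ` x = x"
  proof
    assume sub: "set cs \<subseteq> x"
    have "?c ` x = ?c ` (set cs \<union> (x - set cs))"
      using sub by (simp add: Un_absorb1 Un_Diff_cancel)
    also have "\<dots> = ?c ` set cs \<union> ?c ` (x - set cs)" by (rule image_Un)
    also have "\<dots> = set cs \<union> (x - set cs)"
      using permutes_image_disjoint[OF perm, of "x - set cs"]
      by (simp only: permutes_image[OF perm] Diff_disjoint Int_commute)
    also have "\<dots> = x" using sub by blast
    finally show ?thesis .
  qed (rule permutes_image_disjoint[OF perm])
qed

lemma card_cycle_fixed_tsubsets:
  assumes cs: "distinct cs" "length cs = k" "set cs \<subseteq> {1..n}" and "1 \<le> k" "t \<le> n"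
  shows "card {x \<in> tsubsets n t. cycle_of_list cs ` x = x} = ((n - k) choose t) + ((n - k) choose (n - t))"
proof -
  let ?S = "set cs"
  have card_S: "card ?S = k" using cs by (simp add: distinct_card)
  have "?S \<noteq> {}" using assms(4) cs(2) by auto
  then have disjoint: "{x \<in> tsubsets n t. x \<inter> ?S = {}} \<inter> {x \<in> tsubsets n t. ?S \<subseteq> x} = {}"
    by (auto simp: Int_absorb1)
  have "{x \<in> tsubsets n t. cycle_of_list cs ` x = x} = {x \<in> tsubsets n t. x \<inter> ?S = {}} \<union> {x \<in> tsubsets n t. ?S \<subseteq> x}"
    by (auto simp: cycle_of_list_image_eq_iff[OF cs(1)])
  then show ?thesis
    using card_tsubsets_disjoint[OF cs(3)] card_tsubsets_supersets[OF cs(3) assms(5)] card_S disjoint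
    by (simp add: card_Un_disjoint)
qed

lemma ktrace_action_kernel_Qcyc:
  assumes "1 \<le> k" "k \<le> n" "t \<le> n"
  shows "ktrace (tsubsets n t) (action_kernel n (Qcyc n k)) = real ((n - k) choose t) + real ((n - k) choose (n - t))"
proof -
  let ?C = "kcycles n k"
  have fixed: "(\<Sum>x\<in>tsubsets n t. kdelta (g ` x) x) = real ((n - k) choose t) + real ((n - k) choose (n - t))"
    if g: "g \<in> ?C" for g
  proof -
    obtain cs where cs: "distinct cs" "length cs = k" "set cs \<subseteq> {1..n}" "g = cycle_of_list cs"
      using g by (auto simp: kcycles_def)
    have "(\<Sum>x\<in>tsubsets n t. kdelta (g ` x) x) = card {x \<in> tsubsets n t. g ` x = x}"
      by (simp add: kdelta_def sum.If_cases Int_def)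
    then show ?thesis using card_cycle_fixed_tsubsets[OF cs(1-3) assms(1,3)] cs(4) by simp
  qed
  have "ktrace (tsubsets n t) (action_kernel n (Qcyc n k)) =
      (\<Sum>g\<in>Sym n. Qcyc n k g * (\<Sum>x\<in>tsubsets n t. kdelta (g ` x) x))"
    unfolding ktrace_def action_kernel_def by (subst sum.swap) (simp add: sum_distrib_left)
  also have "\<dots> = (\<Sum>g\<in>?C. Qcyc n k g * (\<Sum>x\<in>tsubsets n t. kdelta (g ` x) x))"
    by (rule sum.mono_neutral_right) (use kcycles_subset_Sym in \<open>auto simp: Qcyc_def\<close>)
  also have "\<dots> = (\<Sum>g\<in>?C. 1 / card ?C * (real ((n - k) choose t) + real ((n - k) choose (n - t))))"
    by (intro sum.cong refl) (simp add: Qcyc_def fixed)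
  also have "\<dots> = real ((n - k) choose t) + real ((n - k) choose (n - t))"
    using kcycles_nonempty[OF assms(2)] finite_subset[OF kcycles_subset_Sym finite_Sym] by simp
  finally show ?thesis .
qed

lemma specht_eigenvalue_Qcyc:
  assumes "1 \<le> k" "k \<le> n" "1 \<le> t" "2 * t \<le> n"
  shows "specht_eigenvalue n (Qcyc n k) t * specht_dim n t =
    (real ((n - k) choose (n - t)) - real ((n - k) choose (n + 1 - t)))
    + (real ((n - k) choose t) - real ((n - k) choose (t - 1)))"
proof -
  have "n - (t - 1) = n + 1 - t" using assms(3,4) by simp
  then show ?thesis
    using specht_dim_pos[OF assms(3,4)] assms
    by (simp add: specht_eigenvalue_def ktrace_action_kernel_Qcyc)
qed

lemma power_mult_eq_divide_power:
  fixes \<mu> d :: real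
  assumes "d \<noteq> 0" "1 \<le> m"
  shows "\<mu> ^ m * d = (\<mu> * d) ^ m / d ^ (m - 1)"
proof -
  have "d ^ m = d ^ (m - 1) * d" using assms(2) by (simp add: power_eq_if)
  then show ?thesis using assms(1) by (simp add: power_mult_distrib)
qed

lemma specht_eigenvalue_Qcyc_power:
  assumes "1 \<le> k" "k \<le> n" "1 \<le> t" "2 * t \<le> n" "1 \<le> m"
  shows "specht_eigenvalue n (Qcyc n k) t ^ m * specht_dim n t =
    ((real ((n - k) choose (n - t)) - real ((n - k) choose (n + 1 - t)))
      + (real ((n - k) choose t) - real ((n - k) choose (t - 1)))) ^ m
    / (real (n choose t) - real (n choose (t - 1))) ^ (m - 1)"
  using power_mult_eq_divide_power[of "specht_dim n t" m] specht_dim_pos[OF assms(3,4)] assms(5)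
    specht_eigenvalue_Qcyc[OF assms(1-4)]
  by (simp add: specht_dim_def)

theorem corollary3p14:
  fixes a b n k N :: nat and x0 :: "nat set \<times> nat set"
  assumes "a \<ge> b" "b \<ge> 1" "a + b = n" "2 \<le> k" "k \<le> n" "N \<ge> 1"
    and "x0 \<in> tabloids n a b"
  shows "(tv_unif (tabloids n a b) (act_vec n (conv_pow n (Qcyc n k) N) x0))\<^sup>2
    \<le> (1/4) * (\<Sum>t=1..b.
        (((real ((n-k) choose (n-t)) - real ((n-k) choose (n+1-t)))
          + (real ((n-k) choose t) - real ((n-k) choose (t-1)))) ^ (2*N))
        / ((real (n choose t) - real (n choose (t-1))) ^ (2*N-1)))"
proof -
  have "(tv_unif (tabloids n a b) (act_vec n (conv_pow n (Qcyc n k) N) x0))\<^sup>2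
      \<le> 1/4 * (\<Sum>t=1..b. specht_eigenvalue n (Qcyc n k) t ^ (2 * N) * specht_dim n t)"
    using conj_invariant_Qcyc sum_Qcyc[OF assms(5)] assms(1,3,7) by (rule tv_unif_action_sq_le)
  also have "(\<Sum>t=1..b. specht_eigenvalue n (Qcyc n k) t ^ (2 * N) * specht_dim n t) = (\<Sum>t=1..b.
        (((real ((n-k) choose (n-t)) - real ((n-k) choose (n+1-t)))
          + (real ((n-k) choose t) - real ((n-k) choose (t-1)))) ^ (2*N))
        / ((real (n choose t) - real (n choose (t-1))) ^ (2*N-1)))"
    using assms(1-6) by (intro sum.cong refl specht_eigenvalue_Qcyc_power) auto
  finally show ?thesis .
qed

end
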